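(* Let $M$ be a regular $po$-$\Gamma$-semigroup. Then every fuzzy right ideal and every fuzzy left ideal $f$ of $M$ is idempotent, i.e. $f\circ f=f$.
   Context: Let $M$ and $\Gamma$ be nonempty sets with a map $M\times\Gamma\times M\to M$, $(a,\gamma,b)\mapsto a\gamma b$, satisfying $(a\gamma b)\mu c=a\gamma(b\mu c)$ for all $a,b,c\in M$, $\gamma,\mu\in\Gamma$. A $po$-$\Gamma$-semigroup is such an $M$ with a partial order $\le$ such that $a\le b$ implies $a\gamma c\le b\gamma c$ and $c\gamma a\le c\gamma b$ for all $c\in M$, $\gamma\in\Gamma$. For $H\subseteq M$, $(H]=\{t\in M: t\le h \text{ for some } h\in H\}$; $a\Gamma M\Gamma a=\{a\gamma x\mu a: x\in M,\gamma,\mu\in\Gamma\}$. $M$ is regular if $a\in(a\Gamma M\Gamma a]$ for every $a\in M$. A fuzzy subset of $M$ is a map $M\to[0,1]$. For $a\in M$ let $A_a=\{(y,z)\in M\times M: a\le y\gamma z \text{ for some }\gamma\in\Gamma\}$. $(f\circ g)(a)=\bigvee_{(y,z)\in A_a}\min\{f(y),g(z)\}$ if $A_a\ne\emptyset$, and $0$ otherwise. A fuzzy right (resp. left) ideal is a fuzzy subset $f$ with $f(x\gamma y)\ge f(x)$ (resp. $f(x\gamma y)\ge f(y)$) for all $x,y\in M,\gamma\in\Gamma$, and $x\le y\Rightarrow f(x)\ge f(y)$. *)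

theory Defs
  imports Complex_Main
begin

text \<open>M is the type 'm with a partial order (class order); Gamma is the type 'g;
  the ternary operation is mult a \<gamma> b = a\<gamma>b.\<close>

definition po_gamma_semigroup :: "('m::order \<Rightarrow> 'g \<Rightarrow> 'm \<Rightarrow> 'm) \<Rightarrow> bool" where
  "po_gamma_semigroup mult \<longleftrightarrow>
     (\<forall>a b c \<gamma> \<mu>. mult (mult a \<gamma> b) \<mu> c = mult a \<gamma> (mult b \<mu> c)) \<and>
     (\<forall>a b c \<gamma>. a \<le> b \<longrightarrow> mult a \<gamma> c \<le> mult b \<gamma> c \<and> mult c \<gamma> a \<le> mult c \<gamma> b)"

definition down_closure :: "'m::order set \<Rightarrow> 'm set" where
  "down_closure H = {t. \<exists>h\<in>H. t \<le> h}"

definition regular_pgs :: "('m::order \<Rightarrow> 'g \<Rightarrow> 'm \<Rightarrow> 'm) \<Rightarrow> bool" where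
  "regular_pgs mult \<longleftrightarrow>
     (\<forall>a. a \<in> down_closure {mult (mult a \<gamma> x) \<mu> a | x \<gamma> \<mu>. True})"

definition A_set :: "('m::order \<Rightarrow> 'g \<Rightarrow> 'm \<Rightarrow> 'm) \<Rightarrow> 'm \<Rightarrow> ('m \<times> 'm) set" where
  "A_set mult a = {(y, z). \<exists>\<gamma>. a \<le> mult y \<gamma> z}"

definition fuzzy_subset :: "('m \<Rightarrow> real) \<Rightarrow> bool" where
  "fuzzy_subset f \<longleftrightarrow> (\<forall>x. 0 \<le> f x \<and> f x \<le> 1)"

definition fuzzy_comp :: "('m::order \<Rightarrow> 'g \<Rightarrow> 'm \<Rightarrow> 'm) \<Rightarrow> ('m \<Rightarrow> real) \<Rightarrow> ('m \<Rightarrow> real) \<Rightarrow> 'm \<Rightarrow> real" where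
  "fuzzy_comp mult f g a =
     (if A_set mult a \<noteq> {}
      then (SUP p\<in>A_set mult a. min (f (fst p)) (g (snd p)))
      else 0)"

definition fuzzy_right_ideal :: "('m::order \<Rightarrow> 'g \<Rightarrow> 'm \<Rightarrow> 'm) \<Rightarrow> ('m \<Rightarrow> real) \<Rightarrow> bool" where
  "fuzzy_right_ideal mult f \<longleftrightarrow> fuzzy_subset f \<and>
     (\<forall>x y \<gamma>. f (mult x \<gamma> y) \<ge> f x) \<and> (\<forall>x y. x \<le> y \<longrightarrow> f x \<ge> f y)"

definition fuzzy_left_ideal :: "('m::order \<Rightarrow> 'g \<Rightarrow> 'm \<Rightarrow> 'm) \<Rightarrow> ('m \<Rightarrow> real) \<Rightarrow> bool" where
  "fuzzy_left_ideal mult f \<longleftrightarrow> fuzzy_subset f \<and>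
     (\<forall>x y \<gamma>. f (mult x \<gamma> y) \<ge> f y) \<and> (\<forall>x y. x \<le> y \<longrightarrow> f x \<ge> f y)"

end

theory Submission
  imports Defs
begin

text \<open>For a fuzzy right ideal f, every pair (y, z) with a \<le> y\<gamma>z has f y \<le> f (y\<gamma>z) \<le> f a, so
  f \<circ> f \<le> f; regularity a \<le> a\<gamma>x\<mu>a supplies the pair (a\<gamma>x, a), at which min (f (a\<gamma>x)) (f a) = f a,
  so the supremum is attained and equals f a. Left ideals are symmetric, using the pair
  (a, x\<mu>a) obtained by associativity.\<close>

lemma fuzzy_comp_eq_maximum:
  assumes "(y, z) \<in> A_set mult a"
    and "\<And>q. q \<in> A_set mult a \<Longrightarrow> min (f (fst q)) (g (snd q)) \<le> min (f y) (g z)"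
  shows "fuzzy_comp mult f g a = min (f y) (g z)"
proof -
  have "(SUP q\<in>A_set mult a. min (f (fst q)) (g (snd q))) = min (f y) (g z)"
    using assms by (intro cSup_eq_maximum) force+
  then show ?thesis using assms(1) unfolding fuzzy_comp_def by auto
qed

lemma fuzzy_right_ideal_le_of_A_set:
  assumes "fuzzy_right_ideal mult f" and "(y, z) \<in> A_set mult a"
  shows "f y \<le> f a"
proof -
  obtain \<gamma> where "a \<le> mult y \<gamma> z" using assms(2) unfolding A_set_def by blast
  then have "f (mult y \<gamma> z) \<le> f a" and "f y \<le> f (mult y \<gamma> z)"
    using assms(1) unfolding fuzzy_right_ideal_def by auto
  then show ?thesis by linarith
qed

lemma fuzzy_left_ideal_le_of_A_set:
  assumes "fuzzy_left_ideal mult f" and "(y, z) \<in> A_set mult a"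
  shows "f z \<le> f a"
proof -
  obtain \<gamma> where "a \<le> mult y \<gamma> z" using assms(2) unfolding A_set_def by blast
  then have "f (mult y \<gamma> z) \<le> f a" and "f z \<le> f (mult y \<gamma> z)"
    using assms(1) unfolding fuzzy_left_ideal_def by auto
  then show ?thesis by linarith
qed

lemma regular_pgsE:
  assumes "regular_pgs mult"
  obtains x \<gamma> \<mu> where "a \<le> mult (mult a \<gamma> x) \<mu> a"
  using assms unfolding regular_pgs_def down_closure_def by blast

lemma regular_left_factor_in_A_set:
  assumes "regular_pgs mult"
  shows "\<exists>x \<gamma>. (mult a \<gamma> x, a) \<in> A_set mult a"
  using assms unfolding A_set_def by (blast elim: regular_pgsE)

lemma regular_right_factor_in_A_set:
  assumes "po_gamma_semigroup mult" and "regular_pgs mult"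
  shows "\<exists>x \<mu>. (a, mult x \<mu> a) \<in> A_set mult a"
proof -
  obtain x \<gamma> \<mu> where "a \<le> mult (mult a \<gamma> x) \<mu> a" using assms(2) by (rule regular_pgsE)
  then have "a \<le> mult a \<gamma> (mult x \<mu> a)"
    using assms(1) unfolding po_gamma_semigroup_def by simp
  then show ?thesis unfolding A_set_def by blast
qed

lemma regular_fuzzy_right_ideal_idem:
  assumes "regular_pgs mult" and f: "fuzzy_right_ideal mult f"
  shows "fuzzy_comp mult f f = f"
proof
  fix a
  obtain x \<gamma> where p: "(mult a \<gamma> x, a) \<in> A_set mult a"
    using regular_left_factor_in_A_set[OF assms(1)] by blast
  have "f a \<le> f (mult a \<gamma> x)" using f unfolding fuzzy_right_ideal_def by blast
  then have attained: "min (f (mult a \<gamma> x)) (f a) = f a" by simp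
  have "fuzzy_comp mult f f a = min (f (mult a \<gamma> x)) (f a)"
  proof (rule fuzzy_comp_eq_maximum[OF p])
    fix q assume "q \<in> A_set mult a"
    then have "f (fst q) \<le> f a" using fuzzy_right_ideal_le_of_A_set[OF f] by (cases q) simp
    then show "min (f (fst q)) (f (snd q)) \<le> min (f (mult a \<gamma> x)) (f a)"
      using attained by linarith
  qed
  then show "fuzzy_comp mult f f a = f a" using attained by simp
qed

lemma regular_fuzzy_left_ideal_idem:
  assumes "po_gamma_semigroup mult" "regular_pgs mult" and f: "fuzzy_left_ideal mult f"
  shows "fuzzy_comp mult f f = f"
proof
  fix a
  obtain x \<mu> where p: "(a, mult x \<mu> a) \<in> A_set mult a"
    using regular_right_factor_in_A_set[OF assms(1,2)] by blast
  have "f a \<le> f (mult x \<mu> a)" using f unfolding fuzzy_left_ideal_def by blast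
  then have attained: "min (f a) (f (mult x \<mu> a)) = f a" by simp
  have "fuzzy_comp mult f f a = min (f a) (f (mult x \<mu> a))"
  proof (rule fuzzy_comp_eq_maximum[OF p])
    fix q assume "q \<in> A_set mult a"
    then have "f (snd q) \<le> f a" using fuzzy_left_ideal_le_of_A_set[OF f] by (cases q) simp
    then show "min (f (fst q)) (f (snd q)) \<le> min (f a) (f (mult x \<mu> a))"
      using attained by linarith
  qed
  then show "fuzzy_comp mult f f a = f a" using attained by simp
qed

theorem corollary31:
  fixes mult :: "'m::order \<Rightarrow> 'g \<Rightarrow> 'm \<Rightarrow> 'm"
  assumes "po_gamma_semigroup mult"
    and "regular_pgs mult"
  shows "(\<forall>f. fuzzy_right_ideal mult f \<longrightarrow> fuzzy_comp mult f f = f) \<and>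
         (\<forall>f. fuzzy_left_ideal mult f \<longrightarrow> fuzzy_comp mult f f = f)"
  using regular_fuzzy_right_ideal_idem[OF assms(2)] regular_fuzzy_left_ideal_idem[OF assms]
  by blast

end
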